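(* Let $G_n$, $g_n$ and $A_n$ be as defined in the context. Then for all $n\ge2$, $$A_n=G_n+G_{n-1}=g_{n+1}-g_{n-1}.$$
   Context: $H\times K$ denotes the Cartesian product of graphs. $P_n$ is the path with vertex set $\{1,\dots,n\}$ and $C_4$ is the $4$-cycle. A domino tiling of a finite graph is a perfect matching. $G_n$ is the number of domino tilings of $C_4\times P_n$. $g_n$ is the number of domino tilings of the graph obtained from $C_4\times P_n$ by deleting two adjacent vertices of the copy $C_4\times\{1\}$. $A_n=\frac16\big[(3+\sqrt3)(2+\sqrt3)^n+(3-\sqrt3)(2-\sqrt3)^n\big]$, so that $A_1=3$, $A_2=11$, $A_3=41,\dots$ *)

theory Defs
  imports Complex_Main
begin

text \<open>Finite simple graphs are given by a vertex set V and an edge set E of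
  2-element subsets of V.\<close>

definition perfect_matching :: "'a set \<Rightarrow> 'a set set \<Rightarrow> 'a set set \<Rightarrow> bool" where
  "perfect_matching V E M \<longleftrightarrow> M \<subseteq> E \<and> (\<forall>v\<in>V. \<exists>!e. e \<in> M \<and> v \<in> e)"

definition num_tilings :: "'a set \<Rightarrow> 'a set set \<Rightarrow> nat" where
  "num_tilings V E = card {M. perfect_matching V E M}"

definition cart_verts :: "'a set \<Rightarrow> 'b set \<Rightarrow> ('a \<times> 'b) set" where
  "cart_verts V1 V2 = V1 \<times> V2"

definition cart_edges :: "'a set \<Rightarrow> 'a set set \<Rightarrow> 'b set \<Rightarrow> 'b set set \<Rightarrow> ('a \<times> 'b) set set" where
  "cart_edges V1 E1 V2 E2 =
     {{(a, b), (a', b)} | a a' b. {a, a'} \<in> E1 \<and> b \<in> V2} \<union>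
     {{(a, b), (a, b')} | a b b'. a \<in> V1 \<and> {b, b'} \<in> E2}"

definition C4_verts :: "nat set" where "C4_verts = {0, 1, 2, 3}"
definition C4_edges :: "nat set set" where
  "C4_edges = {{i, (i + 1) mod 4} | i. i < 4}"

definition P_verts :: "nat \<Rightarrow> nat set" where "P_verts n = {1..n}"
definition P_edges :: "nat \<Rightarrow> nat set set" where
  "P_edges n = {{i, i + 1} | i. 1 \<le> i \<and> i < n}"

definition CP_verts :: "nat \<Rightarrow> (nat \<times> nat) set" where
  "CP_verts n = cart_verts C4_verts (P_verts n)"
definition CP_edges :: "nat \<Rightarrow> (nat \<times> nat) set set" where
  "CP_edges n = cart_edges C4_verts C4_edges (P_verts n) (P_edges n)"

definition G :: "nat \<Rightarrow> nat" where
  "G n = num_tilings (CP_verts n) (CP_edges n)"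

definition g :: "nat \<Rightarrow> nat" where
  "g n = (let V = CP_verts n - {(0, 1), (1, 1)}
          in num_tilings V {e \<in> CP_edges n. e \<subseteq> V})"

definition A :: "nat \<Rightarrow> real" where
  "A n = ((3 + sqrt 3) * (2 + sqrt 3) ^ n + (3 - sqrt 3) * (2 - sqrt 3) ^ n) / 6"

end

theory Submission
  imports Defs
begin

text \<open>Tile C4 \<times> P_n row by row: the first uncovered vertex of the lowest incomplete row is
  covered by a horizontal domino or by a vertical one reaching into the next row. Started from a
  complete bottom row, the part of a row left uncovered when the row below is finished is the full
  row, a pair of adjacent vertices, or empty. Writing u_n, w_n for the tilings of C4 \<times> P_n with
  the bottom row complete, resp. reduced to a pair of adjacent vertices, this gives
  u_(n+2) = 2 u_(n+1) + 4 w_(n+1) + u_n and w_(n+1) = u_n + w_n, so G_n = u_n and g_n = w_n.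
  Both G_n + G_(n-1) and g_(n+1) - g_(n-1) then satisfy x_(n+2) = 4 x_(n+1) - x_n, the recurrence
  of A_n, and they agree with A_n for n = 2, 3.\<close>

section \<open>Perfect matchings of induced subgraphs\<close>

definition induced_matchings :: "'a set \<Rightarrow> 'a set set \<Rightarrow> 'a set set set" where
  "induced_matchings V E = {M. perfect_matching V {e \<in> E. e \<subseteq> V} M}"

lemma induced_matchings_iff:
  "M \<in> induced_matchings V E \<longleftrightarrow>
     (\<forall>e\<in>M. e \<in> E \<and> e \<subseteq> V) \<and> (\<forall>x\<in>V. \<exists>!e. e \<in> M \<and> x \<in> e)"
  by (auto simp: induced_matchings_def perfect_matching_def)

lemma finite_induced_matchings: "finite V \<Longrightarrow> finite (induced_matchings V E)"
  by (rule finite_subset[where B = "Pow (Pow V)"]) (force simp: induced_matchings_iff, simp)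

lemma induced_matchings_empty: "{} \<notin> E \<Longrightarrow> induced_matchings {} E = {{}}"
  by (force simp: induced_matchings_iff)

lemma induced_matchings_remove:
  assumes "M \<in> induced_matchings V E" and "e \<in> M"
  shows "M - {e} \<in> induced_matchings (V - e) E"
proof -
  have edges: "\<forall>e\<in>M. e \<in> E \<and> e \<subseteq> V" and cover: "\<forall>x\<in>V. \<exists>!e. e \<in> M \<and> x \<in> e"
    using assms(1) by (auto simp: induced_matchings_iff)
  have disjoint: "e' \<inter> e = {}" if "e' \<in> M" "e' \<noteq> e" for e'
    using cover edges assms(2) that by blast
  show ?thesis
    unfolding induced_matchings_iff
  proof (rule conjI; intro ballI)
    fix e' assume "e' \<in> M - {e}"
    then show "e' \<in> E \<and> e' \<subseteq> V - e" using edges disjoint by blast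
  next
    fix x assume "x \<in> V - e"
    then show "\<exists>!e'. e' \<in> M - {e} \<and> x \<in> e'" using cover by blast
  qed
qed

lemma induced_matchings_insert:
  assumes "e \<in> E" "e \<subseteq> V" and "M \<in> induced_matchings (V - e) E"
  shows "insert e M \<in> induced_matchings V E"
proof -
  have edges: "\<forall>e'\<in>M. e' \<in> E \<and> e' \<subseteq> V - e" and cover: "\<forall>x\<in>V - e. \<exists>!e'. e' \<in> M \<and> x \<in> e'"
    using assms(3) by (auto simp: induced_matchings_iff)
  show ?thesis
    unfolding induced_matchings_iff
  proof (rule conjI; intro ballI)
    fix e' assume "e' \<in> insert e M"
    then show "e' \<in> E \<and> e' \<subseteq> V" using edges assms(1,2) by blast
  next
    fix x assume "x \<in> V"
    show "\<exists>!e'. e' \<in> insert e M \<and> x \<in> e'"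
    proof (cases "x \<in> e")
      case True
      then show ?thesis using edges by blast
    next
      case False
      then show ?thesis using cover \<open>x \<in> V\<close> by blast
    qed
  qed
qed

lemma induced_matchings_split:
  assumes "v \<in> V" and "\<forall>e\<in>E. card e = 2"
  shows "induced_matchings V E =
           (\<Union>u\<in>{u \<in> V. {v, u} \<in> E}. insert {v, u} ` induced_matchings (V - {v, u}) E)"
proof (intro equalityI subsetI)
  fix M assume M: "M \<in> induced_matchings V E"
  then obtain e where e: "e \<in> M" "v \<in> e" "e \<in> E" "e \<subseteq> V"
    using assms(1) by (auto simp: induced_matchings_iff)
  obtain x y where "e = {x, y}" using e(3) assms(2) by (meson card_2_iff)
  define u where "u = (if x = v then y else x)"
  have u: "e = {v, u}" using \<open>e = {x, y}\<close> e(2) by (auto simp: u_def)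
  have "M - {{v, u}} \<in> induced_matchings (V - {v, u}) E"
    using induced_matchings_remove[OF M e(1)] u by simp
  moreover have "M = insert {v, u} (M - {{v, u}})" using e(1) u by (simp add: insert_absorb)
  ultimately have "M \<in> insert {v, u} ` induced_matchings (V - {v, u}) E" by (rule rev_image_eqI)
  moreover have "u \<in> {u \<in> V. {v, u} \<in> E}" using e u by simp
  ultimately show "M \<in> (\<Union>u\<in>{u \<in> V. {v, u} \<in> E}. insert {v, u} ` induced_matchings (V - {v, u}) E)"
    by (rule UN_I[rotated])
next
  fix M assume "M \<in> (\<Union>u\<in>{u \<in> V. {v, u} \<in> E}. insert {v, u} ` induced_matchings (V - {v, u}) E)"
  then obtain u M' where "u \<in> V" "{v, u} \<in> E" "M' \<in> induced_matchings (V - {v, u}) E"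
    and "M = insert {v, u} M'" by blast
  then show "M \<in> induced_matchings V E"
    using assms(1) induced_matchings_insert[of "{v, u}" E V M'] by simp
qed

lemma card_induced_matchings_split:
  assumes "finite V" "v \<in> V" and "\<forall>e\<in>E. card e = 2"
  shows "card (induced_matchings V E) =
           (\<Sum>u | u \<in> V \<and> {v, u} \<in> E. card (induced_matchings (V - {v, u}) E))"
proof -
  let ?N = "{u \<in> V. {v, u} \<in> E}" and ?IM = "\<lambda>u. induced_matchings (V - {v, u}) E"
  have avoid: "v \<notin> e" if "M \<in> ?IM u" "e \<in> M" for u M e
    using that by (auto simp: induced_matchings_iff)
  have "card (induced_matchings V E) = card (\<Union>u\<in>?N. insert {v, u} ` ?IM u)"
    using induced_matchings_split[OF assms(2,3)] by simp
  also have "\<dots> = (\<Sum>u\<in>?N. card (insert {v, u} ` ?IM u))"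
  proof (rule card_UN_disjoint)
    show "finite ?N" using assms(1) by simp
    show "\<forall>u\<in>?N. finite (insert {v, u} ` ?IM u)"
      using assms(1) by (simp add: finite_induced_matchings)
    show "\<forall>i\<in>?N. \<forall>j\<in>?N. i \<noteq> j \<longrightarrow> insert {v, i} ` ?IM i \<inter> insert {v, j} ` ?IM j = {}"
    proof (intro ballI impI equals0I)
      fix i j M assume "i \<noteq> j" "M \<in> insert {v, i} ` ?IM i \<inter> insert {v, j} ` ?IM j"
      then obtain Mi Mj where Mj: "Mj \<in> ?IM j" and eq: "insert {v, i} Mi = insert {v, j} Mj"
        by blast
      have "{v, i} \<in> insert {v, j} Mj" by (metis eq insertI1)
      moreover have "{v, i} \<notin> Mj" using avoid[OF Mj] by blast
      ultimately show False using \<open>i \<noteq> j\<close> by (simp add: doubleton_eq_iff)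
    qed
  qed
  also have "\<dots> = (\<Sum>u\<in>?N. card (?IM u))"
  proof (rule sum.cong[OF refl], rule card_image, rule inj_onI)
    fix u M M' assume "M \<in> ?IM u" "M' \<in> ?IM u" "insert {v, u} M = insert {v, u} M'"
    moreover have "{v, u} \<notin> M" "{v, u} \<notin> M'" using avoid calculation(1,2) by blast+
    ultimately show "M = M'" by (metis insert_ident)
  qed
  finally show ?thesis by simp
qed

section \<open>Regions of the cylinder C4 \<times> {1, 2, ...}\<close>

definition cyl_edges :: "(nat \<times> nat) set set" where
  "cyl_edges =
     {{(a, j), ((a + 1) mod 4, j)} | a j. a < 4 \<and> 1 \<le> j} \<union> {{(a, j), (a, Suc j)} | a j. a < 4 \<and> 1 \<le> j}"

definition cyl_tilings :: "(nat \<times> nat) set \<Rightarrow> nat" where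
  "cyl_tilings V = card (induced_matchings V cyl_edges)"

lemma cyl_edges_iff:
  "e \<in> cyl_edges \<longleftrightarrow>
     (\<exists>a j. e = {(a, j), ((a + 1) mod 4, j)} \<and> a < 4 \<and> 1 \<le> j) \<or>
     (\<exists>a j. e = {(a, j), (a, Suc j)} \<and> a < 4 \<and> 1 \<le> j)"
  unfolding cyl_edges_def by blast

lemma card_cyl_edge: "\<forall>e\<in>cyl_edges. card e = 2"
proof
  fix e assume "e \<in> cyl_edges"
  then show "card e = 2" unfolding cyl_edges_iff
  proof (elim disjE exE conjE)
    fix a j assume "e = {(a, j), ((a + 1) mod 4, j)}" "a < 4"
    moreover have "a \<noteq> (a + 1) mod 4" using \<open>a < 4\<close> by presburger
    ultimately show ?thesis by auto
  qed auto
qed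

lemma cyl_tilings_empty: "cyl_tilings {} = 1"
proof -
  have "{} \<notin> cyl_edges" using card_cyl_edge by force
  then show ?thesis by (simp add: cyl_tilings_def induced_matchings_empty)
qed

lemma cyl_edge_horizontal: "a < 4 \<Longrightarrow> 1 \<le> k \<Longrightarrow> {(a, k), ((a + 1) mod 4, k)} \<in> cyl_edges"
  unfolding cyl_edges_iff by blast

lemma cyl_edge_horizontal': "a < 4 \<Longrightarrow> 1 \<le> k \<Longrightarrow> {(a, k), ((a + 3) mod 4, k)} \<in> cyl_edges"
proof -
  assume "a < 4" "1 \<le> k"
  moreover have "((a + 3) mod 4 + 1) mod 4 = a" using \<open>a < 4\<close> by presburger
  ultimately show ?thesis
    using cyl_edge_horizontal[of "(a + 3) mod 4" k] by (simp add: insert_commute)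
qed

lemma cyl_edge_vertical: "a < 4 \<Longrightarrow> 1 \<le> k \<Longrightarrow> {(a, k), (a, Suc k)} \<in> cyl_edges"
  unfolding cyl_edges_iff by blast

lemma cyl_edge_neighbour:
  assumes "{(a, k), (b, i)} \<in> cyl_edges" "a < 4"
  shows "(b, i) \<in> {((a + 1) mod 4, k), ((a + 3) mod 4, k), (a, Suc k), (a, k - 1)}"
  using assms(1) unfolding cyl_edges_iff
proof (elim disjE exE conjE)
  fix c j assume c: "{(a, k), (b, i)} = {(c, j), ((c + 1) mod 4, j)}" "c < 4"
  then consider "a = c" "b = (c + 1) mod 4" "i = k" | "a = (c + 1) mod 4" "b = c" "i = k"
    by (auto simp: doubleton_eq_iff)
  then show ?thesis
  proof cases
    case 2
    then have "b = (a + 3) mod 4" using c(2) by presburger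
    then show ?thesis using 2 by simp
  qed simp
qed (auto simp: doubleton_eq_iff)

text \<open>What is left of rows k, ..., n in the middle of the tiling: the rows below k are covered, and the
  dominoes placed so far have removed some vertices of rows k and k + 1.\<close>

definition cyl_region :: "nat \<Rightarrow> nat \<Rightarrow> (nat \<Rightarrow> bool) \<Rightarrow> (nat \<Rightarrow> bool) \<Rightarrow> (nat \<times> nat) set" where
  "cyl_region k n p q =
     {(a, j). a < 4 \<and> ((j = k \<and> p a) \<or> (j = Suc k \<and> j \<le> n \<and> q a) \<or> (Suc (Suc k) \<le> j \<and> j \<le> n))}"

lemma finite_cyl_region: "finite (cyl_region k n p q)"
  by (rule finite_subset[where B = "{..<4} \<times> {..k + n}"]) (auto simp: cyl_region_def)

lemma cyl_tilings_cyl_region_expand: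
  assumes k: "1 \<le> k" and a: "a < 4" "p a"
  defines "a\<^sub>1 \<equiv> (a + 1) mod 4" and "a\<^sub>3 \<equiv> (a + 3) mod 4"
  shows "cyl_tilings (cyl_region k n p q) =
    (if p a\<^sub>1 then cyl_tilings (cyl_region k n (p(a := False, a\<^sub>1 := False)) q) else 0) +
    (if p a\<^sub>3 then cyl_tilings (cyl_region k n (p(a := False, a\<^sub>3 := False)) q) else 0) +
    (if Suc k \<le> n \<and> q a then cyl_tilings (cyl_region k n (p(a := False)) (q(a := False))) else 0)"
proof -
  let ?V = "cyl_region k n p q" and ?C = "{(a\<^sub>1, k), (a\<^sub>3, k), (a, Suc k)}"
  define F where "F u = (if u \<in> ?V \<and> {(a, k), u} \<in> cyl_edges then cyl_tilings (?V - {(a, k), u}) else 0)" for u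
  have nbrs: "{u. u \<in> ?V \<and> {(a, k), u} \<in> cyl_edges} \<subseteq> ?C"
  proof (intro subsetI, elim CollectE conjE)
    fix u assume u: "u \<in> ?V" "{(a, k), u} \<in> cyl_edges"
    obtain b i where "u = (b, i)" by fastforce
    moreover have "u \<noteq> (a, k - 1)" using u(1) k by (auto simp: cyl_region_def)
    ultimately show "u \<in> ?C"
      using cyl_edge_neighbour[OF _ a(1)] u(2) by (auto simp: a\<^sub>1_def a\<^sub>3_def)
  qed
  have "(a, k) \<in> ?V" using a by (simp add: cyl_region_def)
  then have "cyl_tilings ?V = (\<Sum>u | u \<in> ?V \<and> {(a, k), u} \<in> cyl_edges. cyl_tilings (?V - {(a, k), u}))"
    unfolding cyl_tilings_def by (rule card_induced_matchings_split[OF finite_cyl_region _ card_cyl_edge])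
  also have "\<dots> = (\<Sum>u \<in> ?C \<inter> {u. u \<in> ?V \<and> {(a, k), u} \<in> cyl_edges}. cyl_tilings (?V - {(a, k), u}))"
    using nbrs by (simp add: Int_absorb1)
  also have "\<dots> = (\<Sum>u\<in>?C. F u)"
    unfolding F_def by (subst sum.inter_restrict) simp_all
  also have "\<dots> = F (a\<^sub>1, k) + F (a\<^sub>3, k) + F (a, Suc k)"
  proof -
    have "a\<^sub>1 \<noteq> a\<^sub>3" unfolding a\<^sub>1_def a\<^sub>3_def by presburger
    then show ?thesis by (simp add: add.assoc)
  qed
  also have "F (a\<^sub>1, k) = (if p a\<^sub>1 then cyl_tilings (cyl_region k n (p(a := False, a\<^sub>1 := False)) q) else 0)"
  proof -
    have "?V - {(a, k), (a\<^sub>1, k)} = cyl_region k n (p(a := False, a\<^sub>1 := False)) q"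
      unfolding cyl_region_def by (auto split: if_splits)
    then show ?thesis
      using cyl_edge_horizontal[OF a(1) k] by (simp add: F_def cyl_region_def a\<^sub>1_def)
  qed
  also have "F (a\<^sub>3, k) = (if p a\<^sub>3 then cyl_tilings (cyl_region k n (p(a := False, a\<^sub>3 := False)) q) else 0)"
  proof -
    have "?V - {(a, k), (a\<^sub>3, k)} = cyl_region k n (p(a := False, a\<^sub>3 := False)) q"
      unfolding cyl_region_def by (auto split: if_splits)
    then show ?thesis
      using cyl_edge_horizontal'[OF a(1) k] by (simp add: F_def cyl_region_def a\<^sub>3_def)
  qed
  also have "F (a, Suc k) = (if Suc k \<le> n \<and> q a then cyl_tilings (cyl_region k n (p(a := False)) (q(a := False))) else 0)"
  proof -
    have "?V - {(a, k), (a, Suc k)} = cyl_region k n (p(a := False)) (q(a := False))"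
      unfolding cyl_region_def by (auto split: if_splits)
    then show ?thesis
      using cyl_edge_vertical[OF a(1) k] a(1) by (auto simp: F_def cyl_region_def)
  qed
  finally show ?thesis .
qed

section \<open>The transfer recursion\<close>

lemma cyl_region_last_row_empty: "\<forall>a<4. \<not> p a \<Longrightarrow> cyl_region n n p q = {}"
  unfolding cyl_region_def by force

lemma cyl_region_shift:
  "\<forall>a<4. \<not> p a \<Longrightarrow> \<forall>a<4. r a \<Longrightarrow> k < n \<Longrightarrow> cyl_region k n p q = cyl_region (Suc k) n q r"
  unfolding cyl_region_def by (rule set_eqI) (clarsimp, fastforce)

type_synonym row = "bool \<times> bool \<times> bool \<times> bool"

definition present :: "row \<Rightarrow> nat \<Rightarrow> bool" where
  "present r a = (case r of (p0, p1, p2, p3) \<Rightarrow> a = 0 \<and> p0 \<or> a = 1 \<and> p1 \<or> a = 2 \<and> p2 \<or> a = 3 \<and> p3)"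

lemma present_iff [simp]:
  "present (p0, p1, p2, p3) a \<longleftrightarrow> a = 0 \<and> p0 \<or> a = 1 \<and> p1 \<or> a = 2 \<and> p2 \<or> a = 3 \<and> p3"
  by (simp add: present_def)

lemma present_upd [simp]:
  "(present (p0, p1, p2, p3))(a := False) = present (p0 \<and> a \<noteq> 0, p1 \<and> a \<noteq> 1, p2 \<and> a \<noteq> 2, p3 \<and> a \<noteq> 3)"
  by (auto simp: fun_eq_iff)

fun num_present :: "row \<Rightarrow> nat" where
  "num_present (p0, p1, p2, p3) = of_bool p0 + of_bool p1 + of_bool p2 + of_bool p3"

text \<open>Each branch covers the first vertex of the bottom row by a domino to its right, to its left or
  upwards; once the bottom row is covered, the window moves up one row.\<close>

function transfer :: "nat \<Rightarrow> row \<Rightarrow> row \<Rightarrow> nat" where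
  "transfer m (p0, p1, p2, p3) (q0, q1, q2, q3) =
    (if p0 then
       (if p1 then transfer m (False, False, p2, p3) (q0, q1, q2, q3) else 0)
     + (if p3 then transfer m (False, p1, p2, False) (q0, q1, q2, q3) else 0)
     + (if 0 < m \<and> q0 then transfer m (False, p1, p2, p3) (False, q1, q2, q3) else 0)
     else if p1 then
       (if p2 then transfer m (False, False, False, p3) (q0, q1, q2, q3) else 0)
     + (if 0 < m \<and> q1 then transfer m (False, False, p2, p3) (q0, False, q2, q3) else 0)
     else if p2 then
       (if p3 then transfer m (False, False, False, False) (q0, q1, q2, q3) else 0)
     + (if 0 < m \<and> q2 then transfer m (False, False, False, p3) (q0, q1, False, q3) else 0)
     else if p3 then
       (if 0 < m \<and> q3 then transfer m (False, False, False, False) (q0, q1, q2, False) else 0)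
     else case m of 0 \<Rightarrow> 1 | Suc m' \<Rightarrow> transfer m' (q0, q1, q2, q3) (True, True, True, True))"
  by pat_completeness auto
termination
  by (relation "measure (\<lambda>(m, p, q). 5 * m + num_present p)") auto

declare transfer.simps [simp del]

lemma cyl_tilings_eq_transfer:
  assumes "1 \<le> k" "k \<le> n"
  shows "cyl_tilings (cyl_region k n (present p) (present q)) = transfer (n - k) p q"
  using assms
proof (induction "5 * (n - k) + num_present p" arbitrary: k p q rule: less_induct)
  case less
  obtain p0 p1 p2 p3 q0 q1 q2 q3 where pq: "p = (p0, p1, p2, p3)" "q = (q0, q1, q2, q3)"
    by (cases p, cases q) auto
  note expand = cyl_tilings_cyl_region_expand[OF \<open>1 \<le> k\<close>, of _ "present p" n "present q"]
  consider p0 | "\<not> p0" p1 | "\<not> p0" "\<not> p1" p2 | "\<not> p0" "\<not> p1" "\<not> p2" p3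
    | "\<not> p0" "\<not> p1" "\<not> p2" "\<not> p3" by blast
  then show ?case
  proof cases
    case 1
    then show ?thesis using expand[of 0] less unfolding pq by (subst transfer.simps) simp
  next
    case 2
    then show ?thesis using expand[of 1] less unfolding pq by (subst transfer.simps) simp
  next
    case 3
    then show ?thesis using expand[of 2] less unfolding pq by (subst transfer.simps) simp
  next
    case 4
    then show ?thesis using expand[of 3] less unfolding pq by (subst transfer.simps) simp
  next
    case 5
    show ?thesis
    proof (cases "k = n")
      case True
      then show ?thesis using 5 cyl_region_last_row_empty unfolding pq
        by (subst transfer.simps) (simp add: cyl_tilings_empty)
    next
      case False
      have "\<forall>a<4. present (True, True, True, True) a" by simp presburger
      then have "cyl_region k n (present p) (present q) =
                   cyl_region (Suc k) n (present q) (present (True, True, True, True))"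
        using 5 False less.prems by (intro cyl_region_shift) (simp_all add: pq)
      moreover have "cyl_tilings (cyl_region (Suc k) n (present q) (present (True, True, True, True)))
                       = transfer (n - Suc k) q (True, True, True, True)"
        using False less.prems by (intro less.hyps) (auto simp: pq)
      moreover have "n - k = Suc (n - Suc k)" using False less.prems(2) by simp
      ultimately show ?thesis using 5 unfolding pq by (subst transfer.simps) simp
    qed
  qed
qed

text \<open>The value notched_tilings 0 = 0 is not g 0 = 1; it makes the recurrence give
  notched_tilings 1 = 1.\<close>

fun full_tilings :: "nat \<Rightarrow> nat" and notched_tilings :: "nat \<Rightarrow> nat" where
  "full_tilings 0 = 1"
| "full_tilings (Suc 0) = 2"
| "full_tilings (Suc (Suc n)) = 2 * full_tilings (Suc n) + 4 * notched_tilings (Suc n) + full_tilings n"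
| "notched_tilings 0 = 0"
| "notched_tilings (Suc n) = full_tilings n + notched_tilings n"

lemma transfer_full_row:
  "transfer m (True, True, True, True) (True, True, True, True) = full_tilings (Suc m) \<and>
   transfer m (True, True, False, False) (True, True, True, True) = notched_tilings (Suc m) \<and>
   transfer m (False, True, True, False) (True, True, True, True) = notched_tilings (Suc m) \<and>
   transfer m (False, False, True, True) (True, True, True, True) = notched_tilings (Suc m) \<and>
   transfer m (True, False, False, True) (True, True, True, True) = notched_tilings (Suc m) \<and>
   transfer m (False, False, False, False) (True, True, True, True) = full_tilings m"
proof (induction m)
  case 0
  show ?case by (simp add: transfer.simps)
next
  case (Suc m)
  then show ?case by (simp add: transfer.simps[of "Suc m"])
qed

section \<open>The sequences G and g\<close>

lemma CP_edges_eq: "CP_edges n = {e \<in> cyl_edges. e \<subseteq> CP_verts n}"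
proof (intro equalityI subsetI)
  fix e assume "e \<in> CP_edges n"
  then show "e \<in> {e \<in> cyl_edges. e \<subseteq> CP_verts n}"
    unfolding CP_edges_def cart_edges_def
  proof (elim UnE CollectE exE conjE)
    fix a a' j assume e: "e = {(a, j), (a', j)}" "{a, a'} \<in> C4_edges" "j \<in> P_verts n"
    then obtain i where i: "{a, a'} = {i, (i + 1) mod 4}" "i < 4" unfolding C4_edges_def by blast
    then have "e = {(i, j), ((i + 1) mod 4, j)}" using e(1) by (auto simp: doubleton_eq_iff)
    moreover have "j \<ge> 1" using e(3) by (simp add: P_verts_def)
    ultimately have "e \<in> cyl_edges" using cyl_edge_horizontal[OF i(2)] by simp
    moreover have "e \<subseteq> CP_verts n"
      using i e(1,3) by (auto simp: doubleton_eq_iff CP_verts_def cart_verts_def C4_verts_def)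
    ultimately show ?thesis by simp
  next
    fix a j j' assume e: "e = {(a, j), (a, j')}" "a \<in> C4_verts" "{j, j'} \<in> P_edges n"
    then obtain i where i: "{j, j'} = {i, Suc i}" "1 \<le> i" "i < n" unfolding P_edges_def by auto
    then have "e = {(a, i), (a, Suc i)}" using e(1) by (auto simp: doubleton_eq_iff)
    moreover have "a < 4" using e(2) by (auto simp: C4_verts_def)
    ultimately have "e \<in> cyl_edges" using cyl_edge_vertical i(2) by simp
    moreover have "e \<subseteq> CP_verts n"
      using i e(1,2) by (auto simp: doubleton_eq_iff CP_verts_def cart_verts_def P_verts_def)
    ultimately show ?thesis by simp
  qed
next
  fix e assume "e \<in> {e \<in> cyl_edges. e \<subseteq> CP_verts n}"
  then have e: "e \<in> cyl_edges" "e \<subseteq> CP_verts n" by auto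
  from e(1) show "e \<in> CP_edges n"
    unfolding cyl_edges_iff
  proof (elim disjE exE conjE)
    fix a j assume h: "e = {(a, j), ((a + 1) mod 4, j)}" "a < 4" "1 \<le> j"
    have "{a, (a + 1) mod 4} \<in> C4_edges" unfolding C4_edges_def using h(2) by blast
    moreover have "j \<in> P_verts n" using e(2) h by (auto simp: CP_verts_def cart_verts_def P_verts_def)
    ultimately show ?thesis unfolding CP_edges_def cart_edges_def using h(1) by blast
  next
    fix a j assume h: "e = {(a, j), (a, Suc j)}" "a < 4" "1 \<le> j"
    have "{j, Suc j} \<in> P_edges n"
      using e(2) h unfolding P_edges_def by (auto simp: CP_verts_def cart_verts_def P_verts_def)
    moreover have "a \<in> C4_verts" using h(2) by (auto simp: C4_verts_def)
    ultimately show ?thesis unfolding CP_edges_def cart_edges_def using h(1) by blast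
  qed
qed

lemma G_eq_cyl_tilings: "G n = cyl_tilings (CP_verts n)"
  by (simp add: G_def num_tilings_def cyl_tilings_def induced_matchings_def CP_edges_eq)

lemma g_eq_cyl_tilings: "g n = cyl_tilings (CP_verts n - {(0, 1), (1, 1)})"
proof -
  have "{e \<in> CP_edges n. e \<subseteq> CP_verts n - {(0, 1), (1, 1)}} = {e \<in> cyl_edges. e \<subseteq> CP_verts n - {(0, 1), (1, 1)}}"
    by (auto simp: CP_edges_eq)
  then show ?thesis by (simp add: g_def num_tilings_def cyl_tilings_def induced_matchings_def Let_def)
qed

lemma CP_verts_eq_cyl_region:
  "CP_verts (Suc m) = cyl_region 1 (Suc m) (present (True, True, True, True)) (present (True, True, True, True))"
  unfolding CP_verts_def cart_verts_def C4_verts_def P_verts_def cyl_region_def by auto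

lemma CP_verts_notched_eq_cyl_region:
  "CP_verts (Suc m) - {(0, 1), (1, 1)} =
     cyl_region 1 (Suc m) (present (False, False, True, True)) (present (True, True, True, True))"
  unfolding CP_verts_def cart_verts_def C4_verts_def P_verts_def cyl_region_def by auto

lemma G_eq_full_tilings: "G (Suc m) = full_tilings (Suc m)"
proof -
  have "G (Suc m) = transfer m (True, True, True, True) (True, True, True, True)"
    unfolding G_eq_cyl_tilings CP_verts_eq_cyl_region by (simp add: cyl_tilings_eq_transfer)
  then show ?thesis using transfer_full_row by simp
qed

lemma g_eq_notched_tilings: "g (Suc m) = notched_tilings (Suc m)"
proof -
  have "g (Suc m) = transfer m (False, False, True, True) (True, True, True, True)"
    unfolding g_eq_cyl_tilings CP_verts_notched_eq_cyl_region by (simp add: cyl_tilings_eq_transfer)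
  then show ?thesis using transfer_full_row by (simp only:)
qed

section \<open>The closed form\<close>

lemma second_order_recurrence_unique:
  assumes "\<And>n. x (Suc (Suc n)) = F (x (Suc n)) (x n)" and "\<And>n. y (Suc (Suc n)) = F (y (Suc n)) (y n)"
    and "x 0 = y 0" and "x 1 = y 1"
  shows "x n = y n"
  using assms(4) by (induction n rule: induct_nat_012) (simp_all add: assms(1-3))

lemma A_Suc_Suc: "A (Suc (Suc n)) = 4 * A (Suc n) - A n"
proof -
  have root: "r ^ Suc (Suc n) = 4 * r ^ Suc n - r ^ n" if "r\<^sup>2 = 4 * r - 1" for r :: real
  proof -
    have "r ^ Suc (Suc n) = r ^ n * r\<^sup>2" by (simp add: power2_eq_square)
    then show ?thesis using that by (simp add: algebra_simps)
  qed
  have "(2 + sqrt 3)\<^sup>2 = 4 * (2 + sqrt 3) - 1" "(2 - sqrt 3)\<^sup>2 = 4 * (2 - sqrt 3) - 1"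
    by (simp_all add: power2_eq_square algebra_simps)
  then show ?thesis unfolding A_def by (simp only: root) (simp add: field_simps)
qed

lemma A_2: "A 2 = 11" and A_3: "A 3 = 41"
proof -
  have "A 0 = 1" "A 1 = 3" by (simp_all add: A_def algebra_simps)
  then show "A 2 = 11" "A 3 = 41"
    using A_Suc_Suc[of 0] A_Suc_Suc[of 1] by (simp_all add: numeral_2_eq_2 numeral_3_eq_3)
qed

lemma A_eq_full_tilings: "A (Suc (Suc m)) = real (full_tilings (Suc (Suc m)) + full_tilings (Suc m))"
proof (rule second_order_recurrence_unique[where F = "\<lambda>a b. 4 * a - b"
      and x = "\<lambda>m. A (Suc (Suc m))" and y = "\<lambda>m. real (full_tilings (Suc (Suc m)) + full_tilings (Suc m))"])
  show "A (Suc (Suc (Suc (Suc n)))) = 4 * A (Suc (Suc (Suc n))) - A (Suc (Suc n))" for n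
    by (rule A_Suc_Suc)
  show "real (full_tilings (Suc (Suc (Suc (Suc n)))) + full_tilings (Suc (Suc (Suc n)))) =
          4 * real (full_tilings (Suc (Suc (Suc n))) + full_tilings (Suc (Suc n)))
          - real (full_tilings (Suc (Suc n)) + full_tilings (Suc n))" for n
    by simp
qed (simp_all add: A_2[unfolded numeral_2_eq_2] A_3[unfolded numeral_3_eq_3])

lemma A_eq_notched_tilings:
  "A (Suc (Suc m)) = real (notched_tilings (Suc (Suc (Suc m)))) - real (notched_tilings (Suc m))"
proof (rule second_order_recurrence_unique[where F = "\<lambda>a b. 4 * a - b"
      and x = "\<lambda>m. A (Suc (Suc m))"
      and y = "\<lambda>m. real (notched_tilings (Suc (Suc (Suc m)))) - real (notched_tilings (Suc m))"])
  show "A (Suc (Suc (Suc (Suc n)))) = 4 * A (Suc (Suc (Suc n))) - A (Suc (Suc n))" for n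
    by (rule A_Suc_Suc)
  show "real (notched_tilings (Suc (Suc (Suc (Suc (Suc n)))))) - real (notched_tilings (Suc (Suc (Suc n)))) =
          4 * (real (notched_tilings (Suc (Suc (Suc (Suc n))))) - real (notched_tilings (Suc (Suc n))))
          - (real (notched_tilings (Suc (Suc (Suc n)))) - real (notched_tilings (Suc n)))" for n
    by simp
qed (simp_all add: A_2[unfolded numeral_2_eq_2] A_3[unfolded numeral_3_eq_3])

theorem mainTheorem3:
  fixes n :: nat
  assumes "n \<ge> 2"
  shows "A n = real (G n + G (n - 1)) \<and> A n = real (g (n + 1)) - real (g (n - 1))"
proof -
  obtain m where n: "n = Suc (Suc m)" using assms by (metis add_2_eq_Suc le_Suc_ex)
  show ?thesis
    unfolding n using A_eq_full_tilings A_eq_notched_tilings G_eq_full_tilings g_eq_notched_tilings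
    by simp
qed

end
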